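(* Consider MDVI$(\alpha,K,M)$ with any $\alpha\in[0,1)$ and positive integers $K,M$ on an MDP as in the context, and let $\delta\in(0,1)$. Let $\mathcal{E}_1$ be the event that $\|E_k\|_\infty < 3H\sqrt{A_\infty \iota_1/M}$ for all $k\in\{1,\dots,K\}$. Then $\mathbb{P}(\mathcal{E}_1^c)\leq \delta/4$.
   Context: MDP: finite state set $\mathcal{X}$, finite action set $\mathcal{A}$, discount $\gamma\in[0,1)$, reward $r\in[-1,1]^{\mathcal{X}\times\mathcal{A}}$, transition kernel $P(y|x,a)$, $H=1/(1-\gamma)$, $(Pv)(x,a)=\sum_y P(y|x,a)v(y)$. MDVI$(\alpha,K,M)$: $s_0 = 0$, $w_0=w_{-1}=0$; for $k=0,\dots,K-1$: $v_k = w_k-\alpha w_{k-1}$; for each $(x,a)$, independent samples $y_{k,m,x,a}\sim P(\cdot|x,a)$, $m\in[M]$; $q_{k+1}(x,a) = r(x,a)+\frac{\gamma}{M}\sum_m v_k(y_{k,m,x,a})$; $s_{k+1}=q_{k+1}+\alpha s_k$; $w_{k+1}(x)=\max_a s_{k+1}(x,a)$. Notation: $\widehat P_k v(x,a) = \frac1M\sum_m v(y_{k,m,x,a})$; $\varepsilon_k = \gamma\widehat P_{k-1}v_{k-1} - \gamma P v_{k-1}$ for $k\in[K]$; $E_k = \sum_{j=1}^k\alpha^{k-j}\varepsilon_j$; $A_\infty = 1/(1-\alpha)$; $\iota_1 = \log(8K|\mathcal{X}||\mathcal{A}|/\delta)$. *)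

theory Defs
  imports "HOL-Probability.Probability"
begin

text \<open>A sample outcome: for each iteration k, sample index m, state x and action a,
  the sampled next state y_{k,m,x,a}.\<close>
type_synonym ('x,'a) sample = "nat \<times> nat \<times> 'x \<times> 'a \<Rightarrow> 'x"

text \<open>Joint law of all samples y_{k,m,x,a} (k < K, m < M): independent, y_{k,m,x,a} ~ P(.|x,a).
  Indices m are 0-based ({..<M}), k ranges over 0..K-1.\<close>
definition sample_pmf :: "('x::finite \<Rightarrow> 'a::finite \<Rightarrow> 'x pmf) \<Rightarrow> nat \<Rightarrow> nat \<Rightarrow> ('x,'a) sample pmf" where
  "sample_pmf P K M = Pi_pmf ({..<K} \<times> {..<M} \<times> UNIV \<times> UNIV) undefined (\<lambda>(k,m,x,a). P x a)"

text \<open>MDVI state after k iterations: (s_k, w_k, w_{k-1}).\<close>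
fun mdvi_state :: "real \<Rightarrow> real \<Rightarrow> ('x \<Rightarrow> 'a::finite \<Rightarrow> real) \<Rightarrow> nat \<Rightarrow> ('x,'a) sample \<Rightarrow> nat
      \<Rightarrow> ('x \<Rightarrow> 'a \<Rightarrow> real) \<times> ('x \<Rightarrow> real) \<times> ('x \<Rightarrow> real)" where
  "mdvi_state \<alpha> \<gamma> r M \<omega> 0 = ((\<lambda>_ _. 0), (\<lambda>_. 0), (\<lambda>_. 0))"
| "mdvi_state \<alpha> \<gamma> r M \<omega> (Suc k) =
     (let (s, w, wp) = mdvi_state \<alpha> \<gamma> r M \<omega> k;
          v = (\<lambda>y. w y - \<alpha> * wp y);
          q = (\<lambda>x a. r x a + \<gamma> / real M * (\<Sum>m<M. v (\<omega> (k, m, x, a))));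
          s' = (\<lambda>x a. q x a + \<alpha> * s x a)
      in (s', (\<lambda>x. Max (range (s' x))), w))"

definition mdvi_v :: "real \<Rightarrow> real \<Rightarrow> ('x \<Rightarrow> 'a::finite \<Rightarrow> real) \<Rightarrow> nat \<Rightarrow> ('x,'a) sample \<Rightarrow> nat \<Rightarrow> 'x \<Rightarrow> real" where
  "mdvi_v \<alpha> \<gamma> r M \<omega> k =
     (let (s, w, wp) = mdvi_state \<alpha> \<gamma> r M \<omega> k in (\<lambda>y. w y - \<alpha> * wp y))"

definition hatP :: "nat \<Rightarrow> ('x,'a) sample \<Rightarrow> nat \<Rightarrow> ('x \<Rightarrow> real) \<Rightarrow> 'x \<Rightarrow> 'a \<Rightarrow> real" where
  "hatP M \<omega> k v x a = (1 / real M) * (\<Sum>m<M. v (\<omega> (k, m, x, a)))"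

definition expP :: "('x::finite \<Rightarrow> 'a \<Rightarrow> 'x pmf) \<Rightarrow> ('x \<Rightarrow> real) \<Rightarrow> 'x \<Rightarrow> 'a \<Rightarrow> real" where
  "expP P v x a = (\<Sum>y\<in>UNIV. pmf (P x a) y * v y)"

text \<open>\<epsilon>_k = \<gamma> \<widehat>P_{k-1} v_{k-1} - \<gamma> P v_{k-1}  (meaningful for k \<ge> 1)\<close>
definition mdvi_eps :: "real \<Rightarrow> real \<Rightarrow> ('x::finite \<Rightarrow> 'a::finite \<Rightarrow> 'x pmf) \<Rightarrow> ('x \<Rightarrow> 'a \<Rightarrow> real) \<Rightarrow> nat
      \<Rightarrow> ('x,'a) sample \<Rightarrow> nat \<Rightarrow> 'x \<Rightarrow> 'a \<Rightarrow> real" where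
  "mdvi_eps \<alpha> \<gamma> P r M \<omega> k x a =
     \<gamma> * hatP M \<omega> (k - 1) (mdvi_v \<alpha> \<gamma> r M \<omega> (k - 1)) x a
     - \<gamma> * expP P (mdvi_v \<alpha> \<gamma> r M \<omega> (k - 1)) x a"

definition mdvi_E :: "real \<Rightarrow> real \<Rightarrow> ('x::finite \<Rightarrow> 'a::finite \<Rightarrow> 'x pmf) \<Rightarrow> ('x \<Rightarrow> 'a \<Rightarrow> real) \<Rightarrow> nat
      \<Rightarrow> ('x,'a) sample \<Rightarrow> nat \<Rightarrow> 'x \<Rightarrow> 'a \<Rightarrow> real" where
  "mdvi_E \<alpha> \<gamma> P r M \<omega> k x a = (\<Sum>j\<in>{1..k}. \<alpha> ^ (k - j) * mdvi_eps \<alpha> \<gamma> P r M \<omega> j x a)"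

definition supnorm :: "('x::finite \<Rightarrow> 'a::finite \<Rightarrow> real) \<Rightarrow> real" where
  "supnorm f = Max (range (\<lambda>(x, a). \<bar>f x a\<bar>))"

end

theory Submission
  imports Defs
begin

(* Each eps_j is gamma times the deviation of an empirical mean of M samples of v_(j-1) from its
   mean under P, where |v_(j-1)| <= H and v_(j-1) is determined by the samples of earlier
   iterations. Conditionally on those, Hoeffding's lemma bounds the moment generating function of
   eps_j; peeling off one iteration at a time (Azuma's argument) shows that +-E_k(x,a) is
   sub-Gaussian with variance proxy H^2 A_inf / M. The Chernoff bound at t = 3 H sqrt(A_inf iota_1 / M)
   is exp(-9 iota_1 / 2) <= delta / (8 K |X| |A|), and a union bound over k, (x,a) and the sign
   gives delta / 4. *)

lemma abs_Max_add_scaled_diff_le: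
  fixes q s :: "'a::finite \<Rightarrow> real"
  assumes q: "\<And>a. \<bar>q a\<bar> \<le> H" and "0 \<le> \<alpha>"
  shows "\<bar>Max (range (\<lambda>a. q a + \<alpha> * s a)) - \<alpha> * Max (range s)\<bar> \<le> H"
proof -
  have "q a + \<alpha> * s a \<le> H + \<alpha> * Max (range s)" for a
    using q[of a] mult_left_mono[OF Max_ge[of "range s" "s a"] \<open>0 \<le> \<alpha>\<close>] by simp
  then have upper: "Max (range (\<lambda>a. q a + \<alpha> * s a)) \<le> H + \<alpha> * Max (range s)"
    by simp
  have "Max (range s) \<in> range s"
    by (rule Max_in) auto
  then obtain a0 where a0: "s a0 = Max (range s)"
    by (metis rangeE)
  have "q a0 + \<alpha> * Max (range s) \<le> Max (range (\<lambda>a. q a + \<alpha> * s a))"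
    unfolding a0[symmetric] by simp
  with q[of a0] upper show ?thesis
    by linarith
qed

lemma mdvi_w_eq_Max:
  "fst (snd (mdvi_state \<alpha> \<gamma> r M \<omega> k)) y = Max (range (fst (mdvi_state \<alpha> \<gamma> r M \<omega> k) y))"
  by (cases k) (simp_all add: Let_def case_prod_beta)

lemma abs_add_scaled_mean_le:
  fixes u :: "nat \<Rightarrow> real"
  assumes "0 \<le> \<gamma>" "\<gamma> < 1" "\<bar>\<rho>\<bar> \<le> 1" and u: "\<And>m. m < M \<Longrightarrow> \<bar>u m\<bar> \<le> 1 / (1 - \<gamma>)"
  shows "\<bar>\<rho> + \<gamma> / real M * (\<Sum>m<M. u m)\<bar> \<le> 1 / (1 - \<gamma>)"
proof -
  define H where "H = 1 / (1 - \<gamma>)"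
  have "\<bar>\<Sum>m<M. u m\<bar> \<le> (\<Sum>m<M. \<bar>u m\<bar>)"
    by (rule sum_abs)
  also have "\<dots> \<le> (\<Sum>m<M. H)"
    by (intro sum_mono) (simp add: u H_def)
  finally have "\<bar>\<Sum>m<M. u m\<bar> \<le> real M * H"
    by simp
  then have "\<gamma> / real M * \<bar>\<Sum>m<M. u m\<bar> \<le> \<gamma> / real M * (real M * H)"
    using \<open>0 \<le> \<gamma>\<close> by (intro mult_left_mono) auto
  then have "\<bar>\<gamma> / real M * (\<Sum>m<M. u m)\<bar> \<le> \<gamma> * H"
    using assms by (cases "M = 0") (auto simp: abs_mult H_def)
  moreover have "1 + \<gamma> * H = H"
    using \<open>\<gamma> < 1\<close> by (simp add: H_def field_simps)
  ultimately show ?thesis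
    using \<open>\<bar>\<rho>\<bar> \<le> 1\<close> abs_triangle_ineq[of \<rho>] unfolding H_def by linarith
qed

lemma abs_mdvi_v_le:
  fixes r :: "'x \<Rightarrow> 'a::finite \<Rightarrow> real"
  assumes "0 \<le> \<gamma>" "\<gamma> < 1" and "\<And>x a. \<bar>r x a\<bar> \<le> 1" and "0 \<le> \<alpha>"
  shows "\<bar>mdvi_v \<alpha> \<gamma> r M \<omega> k y\<bar> \<le> 1 / (1 - \<gamma>)"
proof (induction k arbitrary: y)
  case 0
  then show ?case
    using assms by (simp add: mdvi_v_def)
next
  case (Suc k)
  obtain s w wp where state: "mdvi_state \<alpha> \<gamma> r M \<omega> k = (s, w, wp)"
    by (metis prod.exhaust)
  define q where "q x a = r x a + \<gamma> / real M * (\<Sum>m<M. mdvi_v \<alpha> \<gamma> r M \<omega> k (\<omega> (k, m, x, a)))" for x a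
  have "\<bar>q x a\<bar> \<le> 1 / (1 - \<gamma>)" for x a
    unfolding q_def using assms Suc.IH by (intro abs_add_scaled_mean_le) auto
  moreover have "mdvi_v \<alpha> \<gamma> r M \<omega> (Suc k) y = Max (range (\<lambda>a. q y a + \<alpha> * s y a)) - \<alpha> * Max (range (s y))"
    using mdvi_w_eq_Max[of \<alpha> \<gamma> r M \<omega> k y] by (simp add: mdvi_v_def state q_def Let_def)
  ultimately show ?case
    using abs_Max_add_scaled_diff_le[of "q y"] \<open>0 \<le> \<alpha>\<close> by simp
qed

lemma mdvi_state_cong:
  assumes "\<And>j m y b. j < k \<Longrightarrow> m < M \<Longrightarrow> \<omega> (j, m, y, b) = \<omega>' (j, m, y, b)"
  shows "mdvi_state \<alpha> \<gamma> r M \<omega> k = mdvi_state \<alpha> \<gamma> r M \<omega>' k"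
  using assms
proof (induction k)
  case 0
  then show ?case
    by simp
next
  case (Suc k)
  have "(\<Sum>m<M. f (\<omega> (k, m, x, a))) = (\<Sum>m<M. f (\<omega>' (k, m, x, a)))" for f x a
    using Suc.prems by (intro sum.cong) auto
  with Suc show ?case
    by (simp add: Let_def case_prod_beta)
qed

lemma mdvi_v_cong:
  assumes "\<And>j m y b. j < k \<Longrightarrow> m < M \<Longrightarrow> \<omega> (j, m, y, b) = \<omega>' (j, m, y, b)"
  shows "mdvi_v \<alpha> \<gamma> r M \<omega> k = mdvi_v \<alpha> \<gamma> r M \<omega>' k"
proof -
  have "mdvi_state \<alpha> \<gamma> r M \<omega> k = mdvi_state \<alpha> \<gamma> r M \<omega>' k"
    by (rule mdvi_state_cong) (rule assms)
  then show ?thesis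
    unfolding mdvi_v_def by simp
qed

(* 0 < k is needed: eps_0 is a junk value (k - 1 truncates to 0) that reads the samples of
   iteration 0. *)
lemma mdvi_eps_cong:
  assumes "0 < k" and "\<And>j m y b. j < k \<Longrightarrow> m < M \<Longrightarrow> \<omega> (j, m, y, b) = \<omega>' (j, m, y, b)"
  shows "mdvi_eps \<alpha> \<gamma> P r M \<omega> k x a = mdvi_eps \<alpha> \<gamma> P r M \<omega>' k x a"
proof -
  have "mdvi_v \<alpha> \<gamma> r M \<omega> (k - 1) = mdvi_v \<alpha> \<gamma> r M \<omega>' (k - 1)"
    using assms by (intro mdvi_v_cong) auto
  moreover have "hatP M \<omega> (k - 1) f x a = hatP M \<omega>' (k - 1) f x a" for f
    unfolding hatP_def using assms by (intro arg_cong[where f="\<lambda>t. _ * t"] sum.cong) auto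
  ultimately show ?thesis
    unfolding mdvi_eps_def by simp
qed

lemma expP_eq_expectation: "expP P h x a = measure_pmf.expectation (P x a) h"
  unfolding expP_def by (subst integral_measure_pmf_real[where A = UNIV]) (auto simp: mult.commute)

lemma mdvi_eps_Suc_eq:
  assumes "0 < M"
  shows "mdvi_eps \<alpha> \<gamma> P r M \<omega> (Suc n) x a =
    \<gamma> / real M * (\<Sum>m<M. mdvi_v \<alpha> \<gamma> r M \<omega> n (\<omega> (n, m, x, a))
                          - measure_pmf.expectation (P x a) (mdvi_v \<alpha> \<gamma> r M \<omega> n))"
  using assms by (simp add: mdvi_eps_def hatP_def expP_eq_expectation sum_subtractf field_simps)

lemma Hoeffdings_lemma_pmf:
  fixes q :: "'b pmf" and h :: "'b \<Rightarrow> real"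
  assumes h: "\<And>y. \<bar>h y\<bar> \<le> H"
  shows "(\<integral>\<^sup>+y. exp (c * (h y - measure_pmf.expectation q h)) \<partial>q) \<le> exp (c\<^sup>2 * H\<^sup>2 / 2)"
proof (cases "c = 0")
  case True
  then show ?thesis
    by (simp add: measure_pmf.emeasure_space_1)
next
  case False
  define g where "g y = sgn c * h y" for y
  have "\<bar>g y\<bar> \<le> H" for y
    using h[of y] False by (simp add: g_def abs_mult abs_sgn_eq)
  then have "g y \<in> {-H..H}" for y
    by (metis abs_le_iff atLeastAtMost_iff minus_le_iff)
  then interpret interval_bounded_random_variable "measure_pmf q" g "-H" H
    by unfold_locales simp_all
  have shift: "c * (h y - measure_pmf.expectation q h) = \<bar>c\<bar> * (g y - measure_pmf.expectation q g)" for y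
  proof -
    have E: "measure_pmf.expectation q g = sgn c * measure_pmf.expectation q h"
      unfolding g_def by (rule integral_mult_right_zero)
    have "c * (h y - measure_pmf.expectation q h) = \<bar>c\<bar> * (sgn c * (h y - measure_pmf.expectation q h))"
      by (simp add: abs_mult_sgn flip: mult.assoc)
    also have "\<dots> = \<bar>c\<bar> * (g y - measure_pmf.expectation q g)"
      by (simp only: E g_def right_diff_distrib)
    finally show ?thesis .
  qed
  then have "(\<integral>\<^sup>+y. exp (c * (h y - measure_pmf.expectation q h)) \<partial>q)
      = (\<integral>\<^sup>+y. exp (\<bar>c\<bar> * (g y - measure_pmf.expectation q g)) \<partial>q)"
    by simp
  also have "\<dots> \<le> exp (\<bar>c\<bar>\<^sup>2 * (H - - H)\<^sup>2 / 8)"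
    by (rule Hoeffdings_lemma_nn_integral) (use False in simp)
  also have "\<bar>c\<bar>\<^sup>2 * (H - - H)\<^sup>2 / 8 = c\<^sup>2 * H\<^sup>2 / 2"
    by (simp add: power2_eq_square)
  finally show ?thesis .
qed

lemma nn_integral_Pi_pmf_exp_sum_le:
  fixes p :: "'i \<Rightarrow> 'b pmf" and h :: "'b \<Rightarrow> real"
  assumes "finite B" "J \<subseteq> B" and h: "\<And>y. \<bar>h y\<bar> \<le> H"
  shows "(\<integral>\<^sup>+g. exp (c * (\<Sum>i\<in>J. h (g i) - measure_pmf.expectation (p i) h)) \<partial>Pi_pmf B d p)
           \<le> exp (real (card J) * (c\<^sup>2 * H\<^sup>2 / 2))"
proof -
  define F where "F i y = (if i \<in> J then ennreal (exp (c * (h y - measure_pmf.expectation (p i) h))) else 1)"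
    for i y
  have "finite J"
    using assms(1,2) by (rule finite_subset[rotated])
  have factor: "(\<Prod>i\<in>B. F i (g i)) = ennreal (exp (c * (\<Sum>i\<in>J. h (g i) - measure_pmf.expectation (p i) h)))"
    for g
  proof -
    have "(\<Prod>i\<in>B. F i (g i)) = (\<Prod>i\<in>J. ennreal (exp (c * (h (g i) - measure_pmf.expectation (p i) h))))"
      unfolding F_def using assms(1,2) by (simp add: prod.If_cases Int_absorb1)
    also have "\<dots> = ennreal (\<Prod>i\<in>J. exp (c * (h (g i) - measure_pmf.expectation (p i) h)))"
      by (rule prod_ennreal) simp
    also have "(\<Prod>i\<in>J. exp (c * (h (g i) - measure_pmf.expectation (p i) h)))
        = exp (c * (\<Sum>i\<in>J. h (g i) - measure_pmf.expectation (p i) h))"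
      using \<open>finite J\<close> by (simp add: exp_sum sum_distrib_left)
    finally show ?thesis .
  qed
  have "(\<integral>\<^sup>+g. exp (c * (\<Sum>i\<in>J. h (g i) - measure_pmf.expectation (p i) h)) \<partial>Pi_pmf B d p)
      = (\<Prod>i\<in>B. \<integral>\<^sup>+y. F i y \<partial>p i)"
    unfolding factor[symmetric] by (rule nn_integral_prod_Pi_pmf) fact
  also have "\<dots> \<le> (\<Prod>i\<in>B. if i \<in> J then ennreal (exp (c\<^sup>2 * H\<^sup>2 / 2)) else 1)"
    by (intro prod_mono_ennreal)
       (simp add: F_def Hoeffdings_lemma_pmf h measure_pmf.emeasure_space_1)
  also have "\<dots> = ennreal (exp (c\<^sup>2 * H\<^sup>2 / 2)) ^ card J"
    using assms(1,2) by (simp add: prod.If_cases Int_absorb1)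
  also have "\<dots> = ennreal (exp (c\<^sup>2 * H\<^sup>2 / 2) ^ card J)"
    by (simp add: ennreal_power)
  also have "exp (c\<^sup>2 * H\<^sup>2 / 2) ^ card J = exp (real (card J) * (c\<^sup>2 * H\<^sup>2 / 2))"
    by (rule exp_of_nat_mult[symmetric])
  finally show ?thesis .
qed

(* Azuma's argument for a product of pmfs revealed block by block: D n are the coordinates
   revealed after n steps, B n the next block, and Y j depends on D j only. *)
lemma nn_integral_Pi_pmf_exp_sum_adapted_le:
  fixes D B :: "nat \<Rightarrow> 'i set" and Y :: "nat \<Rightarrow> ('i \<Rightarrow> 'b) \<Rightarrow> real" and p :: "'i \<Rightarrow> 'b pmf"
    and V :: "nat \<Rightarrow> real"
  assumes D_Suc: "\<And>n. D (Suc n) = D n \<union> B n" and disjoint: "\<And>n. D n \<inter> B n = {}"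
    and finite: "\<And>n. finite (D n)"
    and adapted: "\<And>j \<omega> \<omega>'. 0 < j \<Longrightarrow> (\<And>i. i \<in> D j \<Longrightarrow> \<omega> i = \<omega>' i) \<Longrightarrow> Y j \<omega> = Y j \<omega>'"
    and cond_mgf: "\<And>n f. (\<integral>\<^sup>+g. exp (Y (Suc n) (\<lambda>i. if i \<in> D n then f i else g i)) \<partial>Pi_pmf (B n) d p)
                           \<le> exp (V (Suc n))"
  shows "(\<integral>\<^sup>+\<omega>. exp (\<Sum>j\<in>{1..n}. Y j \<omega>) \<partial>Pi_pmf (D n) d p) \<le> exp (\<Sum>j\<in>{1..n}. V j)"
proof (induction n)
  case 0
  then show ?case
    by (simp add: measure_pmf.emeasure_space_1)
next
  case (Suc n)
  define merge where "merge f g = (\<lambda>i. if i \<in> D n then f i else g i)" for f g :: "'i \<Rightarrow> 'b"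
  have finite_B: "finite (B n)"
    using finite[of "Suc n"] D_Suc by simp
  have "D j \<subseteq> D n" if "j \<le> n" for j
    using lift_Suc_mono_le[of D, OF _ that] D_Suc by blast
  then have past: "Y j (merge f g) = Y j f" if "j \<in> {1..n}" for j f g
    using that by (intro adapted) (auto simp: merge_def)
  have "(\<integral>\<^sup>+\<omega>. exp (\<Sum>j\<in>{1..Suc n}. Y j \<omega>) \<partial>Pi_pmf (D (Suc n)) d p)
      = (\<integral>\<^sup>+f. \<integral>\<^sup>+g. exp (\<Sum>j\<in>{1..Suc n}. Y j (merge f g)) \<partial>Pi_pmf (B n) d p \<partial>Pi_pmf (D n) d p)"
    unfolding D_Suc Pi_pmf_union[OF finite finite_B disjoint] merge_def
      nn_integral_map_pmf nn_integral_pair_pmf' case_prod_conv ..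
  also have "\<dots> = (\<integral>\<^sup>+f. ennreal (exp (\<Sum>j\<in>{1..n}. Y j f))
                    * (\<integral>\<^sup>+g. exp (Y (Suc n) (merge f g)) \<partial>Pi_pmf (B n) d p) \<partial>Pi_pmf (D n) d p)"
    by (simp add: sum.cl_ivl_Suc past exp_add ennreal_mult nn_integral_cmult)
  also have "\<dots> \<le> (\<integral>\<^sup>+f. ennreal (exp (\<Sum>j\<in>{1..n}. Y j f)) * ennreal (exp (V (Suc n))) \<partial>Pi_pmf (D n) d p)"
    by (intro nn_integral_mono mult_left_mono) (simp_all add: merge_def cond_mgf)
  also have "\<dots> = (\<integral>\<^sup>+f. exp (\<Sum>j\<in>{1..n}. Y j f) \<partial>Pi_pmf (D n) d p) * ennreal (exp (V (Suc n)))"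
    by (simp add: nn_integral_multc)
  also have "\<dots> \<le> ennreal (exp (\<Sum>j\<in>{1..n}. V j)) * ennreal (exp (V (Suc n)))"
    by (intro mult_right_mono Suc.IH) simp
  also have "\<dots> = exp (\<Sum>j\<in>{1..Suc n}. V j)"
    by (simp add: sum.cl_ivl_Suc exp_add ennreal_mult)
  finally show ?case .
qed

lemma mdvi_eps_Suc_cond_mgf_le:
  fixes P :: "'x::finite \<Rightarrow> 'a::finite \<Rightarrow> 'x pmf" and r :: "'x \<Rightarrow> 'a \<Rightarrow> real" and k :: nat
  assumes "0 \<le> \<gamma>" "\<gamma> < 1" "\<And>x a. \<bar>r x a\<bar> \<le> 1" "0 \<le> \<alpha>" "0 < M"
  defines "D \<equiv> {..<k} \<times> {..<M} \<times> (UNIV :: 'x set) \<times> (UNIV :: 'a set)"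
  shows "(\<integral>\<^sup>+g. exp (c * mdvi_eps \<alpha> \<gamma> P r M (\<lambda>i. if i \<in> D then f i else g i) (Suc k) x a)
            \<partial>Pi_pmf ({k} \<times> {..<M} \<times> UNIV \<times> UNIV) undefined (\<lambda>(j, m, y, b). P y b))
         \<le> exp ((c * \<gamma> / (1 - \<gamma>))\<^sup>2 / (2 * real M))"
proof -
  define H where "H = 1 / (1 - \<gamma>)"
  define h where "h = mdvi_v \<alpha> \<gamma> r M f k"
  define J where "J = (\<lambda>m. (k, m, x, a)) ` {..<M}"
  define p where "p = (\<lambda>(j::nat, m::nat, y::'x, b::'a). P y b)"
  have inj: "inj_on (\<lambda>m. (k, m, x, a)) {..<M}"
    by (auto simp: inj_on_def)
  have "c * mdvi_eps \<alpha> \<gamma> P r M (\<lambda>i. if i \<in> D then f i else g i) (Suc k) x a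
      = c * \<gamma> / real M * (\<Sum>i\<in>J. h (g i) - measure_pmf.expectation (p i) h)" for g
  proof -
    have "mdvi_v \<alpha> \<gamma> r M (\<lambda>i. if i \<in> D then f i else g i) k = h"
      unfolding h_def by (rule mdvi_v_cong) (simp add: D_def)
    then show ?thesis
      using \<open>0 < M\<close> by (simp add: J_def mdvi_eps_Suc_eq sum.reindex[OF inj] D_def p_def)
  qed
  then have "(\<integral>\<^sup>+g. exp (c * mdvi_eps \<alpha> \<gamma> P r M (\<lambda>i. if i \<in> D then f i else g i) (Suc k) x a)
        \<partial>Pi_pmf ({k} \<times> {..<M} \<times> UNIV \<times> UNIV) undefined p)
      = (\<integral>\<^sup>+g. exp (c * \<gamma> / real M * (\<Sum>i\<in>J. h (g i) - measure_pmf.expectation (p i) h))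
        \<partial>Pi_pmf ({k} \<times> {..<M} \<times> UNIV \<times> UNIV) undefined p)"
    by simp
  also have "\<dots> \<le> exp (real (card J) * ((c * \<gamma> / real M)\<^sup>2 * H\<^sup>2 / 2))"
    by (rule nn_integral_Pi_pmf_exp_sum_le) (auto simp: J_def h_def H_def intro: abs_mdvi_v_le assms(1-4))
  also have "real (card J) * ((c * \<gamma> / real M)\<^sup>2 * H\<^sup>2 / 2) = (c * \<gamma> * H)\<^sup>2 / (2 * real M)"
    using \<open>0 < M\<close> by (simp add: card_image[OF inj] J_def power2_eq_square field_simps)
  finally show ?thesis
    by (simp add: p_def H_def)
qed

lemma mdvi_weighted_eps_mgf_le:
  fixes P :: "'x::finite \<Rightarrow> 'a::finite \<Rightarrow> 'x pmf" and r :: "'x \<Rightarrow> 'a \<Rightarrow> real"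
  assumes "0 \<le> \<gamma>" "\<gamma> < 1" "\<And>x a. \<bar>r x a\<bar> \<le> 1" "0 \<le> \<alpha>" "0 < M"
  shows "(\<integral>\<^sup>+\<omega>. exp (l * (\<Sum>j\<in>{1..n}. \<beta> j * mdvi_eps \<alpha> \<gamma> P r M \<omega> j x a))
            \<partial>Pi_pmf ({..<n} \<times> {..<M} \<times> UNIV \<times> UNIV) undefined (\<lambda>(j, m, y, b). P y b))
         \<le> exp ((l * \<gamma> / (1 - \<gamma>))\<^sup>2 / (2 * real M) * (\<Sum>j\<in>{1..n}. (\<beta> j)\<^sup>2))"
proof -
  define D where "D k = {..<k::nat} \<times> {..<M} \<times> (UNIV :: 'x set) \<times> (UNIV :: 'a set)" for k
  define B where "B k = {k::nat} \<times> {..<M} \<times> (UNIV :: 'x set) \<times> (UNIV :: 'a set)" for k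
  define Y where "Y j \<omega> = l * \<beta> j * mdvi_eps \<alpha> \<gamma> P r M \<omega> j x a" for j \<omega>
  define V where "V j = (l * \<gamma> / (1 - \<gamma>))\<^sup>2 / (2 * real M) * (\<beta> j)\<^sup>2" for j
  have "(\<integral>\<^sup>+\<omega>. exp (\<Sum>j\<in>{1..n}. Y j \<omega>) \<partial>Pi_pmf (D n) undefined (\<lambda>(j, m, y, b). P y b))
      \<le> exp (\<Sum>j\<in>{1..n}. V j)"
  proof (rule nn_integral_Pi_pmf_exp_sum_adapted_le)
    show "D (Suc k) = D k \<union> B k" "D k \<inter> B k = {}" "finite (D k)" for k
      by (auto simp: D_def B_def)
    show "Y j \<omega> = Y j \<omega>'" if "0 < j" and "\<And>i. i \<in> D j \<Longrightarrow> \<omega> i = \<omega>' i" for j \<omega> \<omega>'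
    proof -
      have "mdvi_eps \<alpha> \<gamma> P r M \<omega> j x a = mdvi_eps \<alpha> \<gamma> P r M \<omega>' j x a"
        by (rule mdvi_eps_cong) (use that in \<open>auto simp: D_def\<close>)
      then show ?thesis
        by (simp add: Y_def)
    qed
    show "(\<integral>\<^sup>+g. exp (Y (Suc k) (\<lambda>i. if i \<in> D k then f i else g i))
            \<partial>Pi_pmf (B k) undefined (\<lambda>(j, m, y, b). P y b)) \<le> exp (V (Suc k))" for k f
    proof -
      have "(\<integral>\<^sup>+g. exp (l * \<beta> (Suc k) * mdvi_eps \<alpha> \<gamma> P r M (\<lambda>i. if i \<in> D k then f i else g i) (Suc k) x a)
              \<partial>Pi_pmf (B k) undefined (\<lambda>(j, m, y, b). P y b))
          \<le> exp ((l * \<beta> (Suc k) * \<gamma> / (1 - \<gamma>))\<^sup>2 / (2 * real M))"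
        unfolding B_def D_def by (rule mdvi_eps_Suc_cond_mgf_le) (fact assms)+
      moreover have "(l * \<beta> (Suc k) * \<gamma> / (1 - \<gamma>))\<^sup>2 / (2 * real M) = V (Suc k)"
        by (simp add: V_def power_mult_distrib power_divide ac_simps)
      ultimately show ?thesis
        by (simp add: Y_def)
    qed
  qed
  then show ?thesis
    by (simp add: Y_def V_def D_def sum_distrib_left mult.assoc)
qed

lemma sum_power_diff_sq_le:
  fixes \<alpha> :: real
  assumes "0 \<le> \<alpha>" "\<alpha> < 1"
  shows "(\<Sum>j\<in>{1..k}. (\<alpha> ^ (k - j))\<^sup>2) \<le> 1 / (1 - \<alpha>)"
proof -
  have "(\<Sum>j\<in>{1..k}. (\<alpha> ^ (k - j))\<^sup>2) \<le> (\<Sum>j\<in>{1..k}. \<alpha> ^ (k - j))"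
    using assms by (intro sum_mono) (simp add: power2_eq_square mult_left_le power_le_one)
  also have "\<dots> = (\<Sum>i<k. \<alpha> ^ i)"
    using sum.nat_diff_reindex[of "\<lambda>i. \<alpha> ^ i" k] by (simp add: sum.atLeast1_atMost_eq)
  also have "\<dots> = (1 - \<alpha> ^ k) / (1 - \<alpha>)"
    using assms by (simp add: sum_gp_strict)
  also have "\<dots> \<le> 1 / (1 - \<alpha>)"
    using assms by (intro divide_right_mono) auto
  finally show ?thesis .
qed

lemma prob_ge_le_exp_of_mgf_le:
  fixes p :: "'w pmf" and Z :: "'w \<Rightarrow> real"
  assumes "0 < t" "0 < V"
    and mgf: "\<And>l. 0 < l \<Longrightarrow> (\<integral>\<^sup>+\<omega>. exp (l * Z \<omega>) \<partial>p) \<le> exp (l\<^sup>2 * V / 2)"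
  shows "measure_pmf.prob p {\<omega>. t \<le> Z \<omega>} \<le> exp (- t\<^sup>2 / (2 * V))"
proof -
  define l where "l = t / V"
  have "0 < l"
    using assms by (simp add: l_def)
  have "emeasure p {\<omega> \<in> UNIV. t \<le> Z \<omega>}
      \<le> ennreal (exp (- l * t)) * (\<integral>\<^sup>+\<omega>. ennreal (exp (l * Z \<omega>)) * indicator UNIV \<omega> \<partial>p)"
    by (rule Chernoff_ineq_nn_integral_ge[OF \<open>0 < l\<close>]) auto
  also have "\<dots> \<le> ennreal (exp (- l * t)) * ennreal (exp (l\<^sup>2 * V / 2))"
    using mgf[OF \<open>0 < l\<close>] by (intro mult_left_mono) auto
  also have "\<dots> = ennreal (exp (- t\<^sup>2 / (2 * V)))"
    using assms by (simp add: l_def ennreal_mult[symmetric] exp_add[symmetric] power2_eq_square field_simps)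
  finally show ?thesis
    by (simp add: measure_pmf.emeasure_eq_measure)
qed

lemma mdvi_E_mgf_le:
  fixes P :: "'x::finite \<Rightarrow> 'a::finite \<Rightarrow> 'x pmf" and r :: "'x \<Rightarrow> 'a \<Rightarrow> real"
  assumes "0 \<le> \<gamma>" "\<gamma> < 1" "\<And>x a. \<bar>r x a\<bar> \<le> 1" "0 \<le> \<alpha>" "\<alpha> < 1" "0 < M"
    and "k \<le> K" "\<bar>\<sigma>\<bar> = 1" "0 < l"
  defines "V \<equiv> 1 / ((1 - \<gamma>)\<^sup>2 * (1 - \<alpha>) * real M)"
  shows "(\<integral>\<^sup>+\<omega>. exp (l * (\<sigma> * mdvi_E \<alpha> \<gamma> P r M \<omega> k x a)) \<partial>sample_pmf P K M) \<le> exp (l\<^sup>2 * V / 2)"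
proof -
  \<comment> \<open>Zero weights beyond k turn \<open>\<sigma> * E_k\<close> into a sum over the whole horizon of \<open>sample_pmf\<close>.\<close>
  define \<beta> where "\<beta> j = (if j \<le> k then \<sigma> * \<alpha> ^ (k - j) else 0)" for j
  have E_eq: "\<sigma> * mdvi_E \<alpha> \<gamma> P r M \<omega> k x a = (\<Sum>j\<in>{1..K}. \<beta> j * mdvi_eps \<alpha> \<gamma> P r M \<omega> j x a)"
    for \<omega>
  proof -
    have "(\<Sum>j\<in>{1..K}. \<beta> j * mdvi_eps \<alpha> \<gamma> P r M \<omega> j x a)
        = (\<Sum>j\<in>{1..k}. \<sigma> * \<alpha> ^ (k - j) * mdvi_eps \<alpha> \<gamma> P r M \<omega> j x a)"
      using \<open>k \<le> K\<close> by (intro sum.mono_neutral_cong_right) (auto simp: \<beta>_def)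
    then show ?thesis
      by (simp add: mdvi_E_def sum_distrib_left mult.assoc)
  qed
  have "\<sigma>\<^sup>2 = 1"
    using \<open>\<bar>\<sigma>\<bar> = 1\<close> by (metis power2_abs power_one)
  then have "(\<Sum>j\<in>{1..K}. (\<beta> j)\<^sup>2) = (\<Sum>j\<in>{1..k}. (\<alpha> ^ (k - j))\<^sup>2)"
    using \<open>k \<le> K\<close>
    by (intro sum.mono_neutral_cong_right) (auto simp: \<beta>_def power_mult_distrib)
  also have "\<dots> \<le> 1 / (1 - \<alpha>)"
    using \<open>0 \<le> \<alpha>\<close> \<open>\<alpha> < 1\<close> by (rule sum_power_diff_sq_le)
  finally have \<beta>_le: "(\<Sum>j\<in>{1..K}. (\<beta> j)\<^sup>2) \<le> 1 / (1 - \<alpha>)" .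
  have "(l * \<gamma> / (1 - \<gamma>))\<^sup>2 \<le> (l / (1 - \<gamma>))\<^sup>2"
    using assms by (intro power_mono divide_right_mono) (auto simp: mult_left_le)
  then have "(l * \<gamma> / (1 - \<gamma>))\<^sup>2 / (2 * real M) * (\<Sum>j\<in>{1..K}. (\<beta> j)\<^sup>2)
      \<le> (l / (1 - \<gamma>))\<^sup>2 / (2 * real M) * (1 / (1 - \<alpha>))"
    using \<beta>_le by (intro mult_mono divide_right_mono) (auto intro: sum_nonneg)
  also have "\<dots> = l\<^sup>2 * V / 2"
    by (simp add: V_def power_divide field_simps)
  finally have exponent_le: "(l * \<gamma> / (1 - \<gamma>))\<^sup>2 / (2 * real M) * (\<Sum>j\<in>{1..K}. (\<beta> j)\<^sup>2) \<le> l\<^sup>2 * V / 2" .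
  have "(\<integral>\<^sup>+\<omega>. exp (l * (\<sigma> * mdvi_E \<alpha> \<gamma> P r M \<omega> k x a)) \<partial>sample_pmf P K M)
      = (\<integral>\<^sup>+\<omega>. exp (l * (\<Sum>j\<in>{1..K}. \<beta> j * mdvi_eps \<alpha> \<gamma> P r M \<omega> j x a))
           \<partial>Pi_pmf ({..<K} \<times> {..<M} \<times> UNIV \<times> UNIV) undefined (\<lambda>(j, m, y, b). P y b))"
    by (simp add: E_eq sample_pmf_def)
  also have "\<dots> \<le> exp ((l * \<gamma> / (1 - \<gamma>))\<^sup>2 / (2 * real M) * (\<Sum>j\<in>{1..K}. (\<beta> j)\<^sup>2))"
    using assms by (intro mdvi_weighted_eps_mgf_le) auto
  also have "\<dots> \<le> exp (l\<^sup>2 * V / 2)"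
    using exponent_le by simp
  finally show ?thesis .
qed

lemma mdvi_E_tail_le_exp_neg:
  fixes P :: "'x::finite \<Rightarrow> 'a::finite \<Rightarrow> 'x pmf" and r :: "'x \<Rightarrow> 'a \<Rightarrow> real"
  assumes "0 \<le> \<gamma>" "\<gamma> < 1" "\<And>x a. \<bar>r x a\<bar> \<le> 1" "0 \<le> \<alpha>" "\<alpha> < 1" "0 < M"
    and "k \<le> K" "\<bar>\<sigma>\<bar> = 1" "0 < \<iota>"
  shows "measure_pmf.prob (sample_pmf P K M)
           {\<omega>. 3 * (1 / (1 - \<gamma>)) * sqrt ((1 / (1 - \<alpha>)) * \<iota> / real M) \<le> \<sigma> * mdvi_E \<alpha> \<gamma> P r M \<omega> k x a}
         \<le> exp (- \<iota>)"
proof -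
  define t where "t = 3 * (1 / (1 - \<gamma>)) * sqrt ((1 / (1 - \<alpha>)) * \<iota> / real M)"
  define V where "V = 1 / ((1 - \<gamma>)\<^sup>2 * (1 - \<alpha>) * real M)"
  have "measure_pmf.prob (sample_pmf P K M) {\<omega>. t \<le> \<sigma> * mdvi_E \<alpha> \<gamma> P r M \<omega> k x a}
      \<le> exp (- t\<^sup>2 / (2 * V))"
    using assms mdvi_E_mgf_le[OF assms(1-8)]
    by (intro prob_ge_le_exp_of_mgf_le) (auto simp: t_def V_def)
  also have "- t\<^sup>2 / (2 * V) = - 9 / 2 * \<iota>"
    using assms by (simp add: t_def V_def power_mult_distrib power_divide field_simps)
  also have "exp (- 9 / 2 * \<iota>) \<le> exp (- \<iota>)"
    using \<open>0 < \<iota>\<close> by simp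
  finally show ?thesis
    unfolding t_def .
qed

lemma le_supnorm_iff: "t \<le> supnorm f \<longleftrightarrow> (\<exists>x a. t \<le> \<bar>f x a\<bar>)"
  unfolding supnorm_def by (subst Max_ge_iff) auto

lemma prob_not_all_supnorm_less_le:
  fixes p :: "'w pmf" and F :: "'w \<Rightarrow> 'k \<Rightarrow> 'x::finite \<Rightarrow> 'a::finite \<Rightarrow> real"
  assumes "finite I"
    and tail: "\<And>k x a \<sigma>. k \<in> I \<Longrightarrow> \<sigma> \<in> {1, -1} \<Longrightarrow> measure_pmf.prob p {\<omega>. t \<le> \<sigma> * F \<omega> k x a} \<le> \<epsilon>"
  shows "measure_pmf.prob p {\<omega>. \<not> (\<forall>k\<in>I. supnorm (F \<omega> k) < t)}
           \<le> 2 * real (card I) * real CARD('x) * real CARD('a) * \<epsilon>"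
proof -
  define J where "J = I \<times> (UNIV :: 'x set) \<times> (UNIV :: 'a set) \<times> ({1, -1} :: real set)"
  define S where "S = (\<lambda>(k, x, a, \<sigma>). {\<omega>. t \<le> \<sigma> * F \<omega> k x a})"
  have "{\<omega>. \<not> (\<forall>k\<in>I. supnorm (F \<omega> k) < t)} \<subseteq> (\<Union>j\<in>J. S j)"
  proof
    fix \<omega>
    assume "\<omega> \<in> {\<omega>. \<not> (\<forall>k\<in>I. supnorm (F \<omega> k) < t)}"
    then obtain k x a where "k \<in> I" "t \<le> \<bar>F \<omega> k x a\<bar>"
      by (auto simp: not_less le_supnorm_iff)
    then have "\<omega> \<in> S (k, x, a, 1) \<or> \<omega> \<in> S (k, x, a, -1)" and "(k, x, a, 1) \<in> J" "(k, x, a, -1) \<in> J"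
      by (auto simp: S_def J_def abs_real_def split: if_splits)
    then show "\<omega> \<in> (\<Union>j\<in>J. S j)"
      by blast
  qed
  then have "measure_pmf.prob p {\<omega>. \<not> (\<forall>k\<in>I. supnorm (F \<omega> k) < t)} \<le> measure_pmf.prob p (\<Union>j\<in>J. S j)"
    by (rule measure_pmf.finite_measure_mono) simp
  also have "\<dots> \<le> (\<Sum>j\<in>J. measure_pmf.prob p (S j))"
    using \<open>finite I\<close> by (intro measure_pmf.finite_measure_subadditive_finite) (auto simp: J_def)
  also have "\<dots> \<le> (\<Sum>j\<in>J. \<epsilon>)"
    using tail[where \<sigma> = 1] tail[where \<sigma> = "-1"] by (intro sum_mono) (auto simp: J_def S_def)
  also have "\<dots> = 2 * real (card I) * real CARD('x) * real CARD('a) * \<epsilon>"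
    by (simp add: J_def card_cartesian_product)
  finally show ?thesis .
qed

theorem lemma2:
  fixes P :: "'x::finite \<Rightarrow> 'a::finite \<Rightarrow> 'x pmf"
    and r :: "'x \<Rightarrow> 'a \<Rightarrow> real"
    and \<gamma> \<alpha> \<delta> :: real and K M :: nat
  assumes "0 \<le> \<gamma>" "\<gamma> < 1"
    and "\<And>x a. \<bar>r x a\<bar> \<le> 1"
    and "0 \<le> \<alpha>" "\<alpha> < 1"
    and "0 < K" "0 < M"
    and "0 < \<delta>" "\<delta> < 1"
  shows "measure_pmf.prob (sample_pmf P K M)
           {\<omega>. \<not> (\<forall>k\<in>{1..K}.
                supnorm (mdvi_E \<alpha> \<gamma> P r M \<omega> k)
                  < 3 * (1 / (1 - \<gamma>)) * sqrt ((1 / (1 - \<alpha>)) *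
                      ln (8 * real K * real (card (UNIV :: 'x set)) * real (card (UNIV :: 'a set)) / \<delta>)
                      / real M))}
         \<le> \<delta> / 4"
proof -
  define N where "N = real K * real CARD('x) * real CARD('a)"
  define \<iota> where "\<iota> = ln (8 * real K * real CARD('x) * real CARD('a) / \<delta>)"
  have "1 \<le> K * CARD('x) * CARD('a)"
    using \<open>0 < K\<close> by (simp add: Suc_le_eq finite_UNIV_card_ge_0)
  then have "1 \<le> N"
    unfolding N_def by (metis of_nat_1 of_nat_le_iff of_nat_mult)
  then have "1 < 8 * N / \<delta>"
    using \<open>0 < \<delta>\<close> \<open>\<delta> < 1\<close> by (simp add: field_simps)
  then have "0 < \<iota>" and exp_\<iota>: "exp (- \<iota>) = \<delta> / (8 * N)"
    by (simp_all add: \<iota>_def N_def mult.assoc exp_minus)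
  have "measure_pmf.prob (sample_pmf P K M)
          {\<omega>. \<not> (\<forall>k\<in>{1..K}. supnorm (mdvi_E \<alpha> \<gamma> P r M \<omega> k)
                   < 3 * (1 / (1 - \<gamma>)) * sqrt ((1 / (1 - \<alpha>)) * \<iota> / real M))}
      \<le> 2 * real (card {1..K}) * real CARD('x) * real CARD('a) * exp (- \<iota>)"
    using assms \<open>0 < \<iota>\<close> by (intro prob_not_all_supnorm_less_le mdvi_E_tail_le_exp_neg) auto
  also have "\<dots> = \<delta> / 4"
    using \<open>0 < K\<close> by (simp add: exp_\<iota> N_def)
  finally show ?thesis
    unfolding \<iota>_def .
qed

end
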